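(* Let $\xi$ be a complete holomorphic vector field without zeros on a Stein manifold $X$, and let $\Phi_t$, $t\in\mathbb{C}$, be the time-$t$ maps of its flow. Then for no $t\in\mathbb{C}$ is $\Phi_t$ robustly non-expelling in $\{\Phi_s:s\in\mathbb{C}\}\subset{\operatorname{Aut}}\,X$; equivalently, $\Phi_t$ is expelling for all $t$ in a dense $G_\delta$ subset of $\mathbb{C}$.
   Context: Complete: flow defined for all complex time. An automorphism is expelling if the set of points with relatively compact forward orbit has empty interior. For a submonoid $A$ of ${\operatorname{Aut}}\,X$ (compact-open topology), $f\in A$ is robustly non-expelling in $A$ if there are a neighbourhood $W$ of $f$ in $A$, a nonempty open $V\subset X$ and a compact $K\subset X$ with $g^j(V)\subset K$ for all $g\in W$, $j\geq0$. *)

theory Defs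
  imports "HOL-Analysis.Analysis"
begin

definition hol_Cn :: "(complex^'n) set \<Rightarrow> (complex^'n \<Rightarrow> complex^'m) \<Rightarrow> bool" where
  "hol_Cn S f \<longleftrightarrow> open S \<and>
     (\<forall>x\<in>S. \<exists>L. (f has_derivative L) (at x) \<and> (\<forall>v. L (\<i> *s v) = \<i> *s L v))"

definition hol_Cn_scalar :: "(complex^'n) set \<Rightarrow> (complex^'n \<Rightarrow> complex) \<Rightarrow> bool" where
  "hol_Cn_scalar S f \<longleftrightarrow> open S \<and>
     (\<forall>x\<in>S. \<exists>L. (f has_derivative L) (at x) \<and> (\<forall>v. L (\<i> *s v) = \<i> * L v))"

definition hol_CxCn :: "(complex \<times> (complex^'n)) set \<Rightarrow> (complex \<times> (complex^'n) \<Rightarrow> complex^'m) \<Rightarrow> bool" where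
  "hol_CxCn S f \<longleftrightarrow> open S \<and>
     (\<forall>x\<in>S. \<exists>L. (f has_derivative L) (at x) \<and>
        (\<forall>t v. L (\<i> * t, \<i> *s v) = \<i> *s L (t, v)))"

definition complex_atlas :: "('a::topological_space set \<times> ('a \<Rightarrow> complex^'n)) set \<Rightarrow> bool" where
  "complex_atlas A \<longleftrightarrow>
     (\<forall>(U,\<phi>)\<in>A. open U \<and> open (\<phi> ` U) \<and> inj_on \<phi> U \<and> continuous_on U \<phi> \<and>
                  continuous_on (\<phi> ` U) (inv_into U \<phi>)) \<and>
     \<Union>(fst ` A) = UNIV \<and>
     (\<forall>(U,\<phi>)\<in>A. \<forall>(V,\<psi>)\<in>A. hol_Cn (\<phi> ` (U \<inter> V)) (\<psi> \<circ> inv_into U \<phi>))"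

definition hol_fun :: "('a::topological_space set \<times> ('a \<Rightarrow> complex^'n)) set \<Rightarrow> ('a \<Rightarrow> complex) \<Rightarrow> bool" where
  "hol_fun A f \<longleftrightarrow> (\<forall>(U,\<phi>)\<in>A. hol_Cn_scalar (\<phi> ` U) (f \<circ> inv_into U \<phi>))"

definition hol_hull :: "('a::topological_space set \<times> ('a \<Rightarrow> complex^'n)) set \<Rightarrow> 'a set \<Rightarrow> 'a set" where
  "hol_hull A K = {x. \<forall>f. hol_fun A f \<longrightarrow> norm (f x) \<le> (SUP y\<in>K. norm (f y))}"

definition stein_manifold ::
  "('a::{t2_space,second_countable_topology} set \<times> ('a \<Rightarrow> complex^'n)) set \<Rightarrow> bool" where
  "stein_manifold A \<longleftrightarrow> complex_atlas A \<and>
     (\<forall>x y. x \<noteq> y \<longrightarrow> (\<exists>f. hol_fun A f \<and> f x \<noteq> f y)) \<and>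
     (\<forall>K. compact K \<longrightarrow> compact (hol_hull A K))"

section \<open>Complete holomorphic vector fields, represented by their flows\<close>

definition complete_hol_flow ::
  "('a::topological_space set \<times> ('a \<Rightarrow> complex^'n)) set \<Rightarrow> (complex \<Rightarrow> 'a \<Rightarrow> 'a) \<Rightarrow> bool" where
  "complete_hol_flow A \<Phi> \<longleftrightarrow>
     \<Phi> 0 = id \<and> (\<forall>s t. \<Phi> (s + t) = \<Phi> s \<circ> \<Phi> t) \<and>
     continuous_on UNIV (\<lambda>(t, x). \<Phi> t x) \<and>
     (\<forall>(U,\<phi>)\<in>A. \<forall>(V,\<psi>)\<in>A.
        hol_CxCn {(t, z). z \<in> \<phi> ` U \<and> \<Phi> t (inv_into U \<phi> z) \<in> V}
                 (\<lambda>(t, z). \<psi> (\<Phi> t (inv_into U \<phi> z))))"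

text \<open>The generating vector field xi has no zeros: at every point p the velocity
xi(p) = d/dt|_{t=0} Phi t p, read in any chart around p, is nonzero.\<close>

definition flow_without_zeros ::
  "('a::topological_space set \<times> ('a \<Rightarrow> complex^'n)) set \<Rightarrow> (complex \<Rightarrow> 'a \<Rightarrow> 'a) \<Rightarrow> bool" where
  "flow_without_zeros A \<Phi> \<longleftrightarrow>
     (\<forall>p. \<forall>(U,\<phi>)\<in>A. p \<in> U \<longrightarrow>
        \<not> ((\<lambda>t. \<phi> (\<Phi> t p)) has_derivative (\<lambda>_. 0)) (at 0))"

definition expelling :: "('a::topological_space \<Rightarrow> 'a) \<Rightarrow> bool" where
  "expelling f \<longleftrightarrow>
     interior {x. compact (closure (range (\<lambda>j::nat. (f ^^ j) x)))} = {}"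

text \<open>Basic neighbourhoods of f in the compact-open topology on a set M of maps:
finite intersections of subbasic sets {g in M. g ` K \<subseteq> U}, K compact, U open.\<close>

definition co_basic_nhd :: "('a::topological_space \<Rightarrow> 'a) set \<Rightarrow> ('a \<Rightarrow> 'a) \<Rightarrow> ('a \<Rightarrow> 'a) set \<Rightarrow> bool" where
  "co_basic_nhd M f W \<longleftrightarrow> (\<exists>P. finite P \<and>
      (\<forall>(K,U)\<in>P. compact K \<and> open U \<and> f ` K \<subseteq> U) \<and>
      W = {g\<in>M. \<forall>(K,U)\<in>P. g ` K \<subseteq> U})"

definition robustly_non_expelling :: "('a::topological_space \<Rightarrow> 'a) set \<Rightarrow> ('a \<Rightarrow> 'a) \<Rightarrow> bool" where
  "robustly_non_expelling M f \<longleftrightarrow> f \<in> M \<and>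
     (\<exists>W V K. co_basic_nhd M f W \<and> open V \<and> V \<noteq> {} \<and> compact K \<and>
        (\<forall>g\<in>W. \<forall>j::nat. (g ^^ j) ` V \<subseteq> K))"

definition dense_Gdelta :: "'b::topological_space set \<Rightarrow> bool" where
  "dense_Gdelta G \<longleftrightarrow> closure G = UNIV \<and>
     (\<exists>U::nat \<Rightarrow> 'b set. (\<forall>k. open (U k)) \<and> G = (\<Inter>k. U k))"

end

theory Submission
  imports Defs "HOL-Complex_Analysis.Complex_Analysis"
begin

(* Suppose that for all times s near some t the iterates of the time-s map keep a point x inside
   a compact set K.  Since the w-map of the flow applied to the k-th iterate of the time-t map is
   the k-th iterate of the time-(t + w/k) map, every accumulation point y of the orbit of x under
   the time-t map has its whole complex orbit inside K.  A holomorphic function restricted to that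
   orbit is then a bounded entire function, hence constant by Liouville; as holomorphic functions
   separate the points of a Stein manifold, y is fixed by the flow, i.e. a zero of the vector
   field.  Robust non-expellingness provides exactly such an open set of times.  For the generic
   statement, apply the same argument to every point d of a countable dense set and every compact
   set K of a countable cofinal family: the closed set of times t for which all iterates of d stay
   in K has empty interior, and Baire's theorem yields the dense G-delta. *)

lemma complex_atlas_chartD:
  assumes "complex_atlas A" "(U, \<phi>) \<in> A"
  shows "open U" "open (\<phi> ` U)" "inj_on \<phi> U" "continuous_on U \<phi>"
    and "continuous_on (\<phi> ` U) (inv_into U \<phi>)"
  using assms unfolding complex_atlas_def by fast+

lemma complex_atlas_chart_at:
  assumes "complex_atlas A"
  obtains U \<phi> where "(U, \<phi>) \<in> A" "x \<in> U"
proof -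
  have "x \<in> \<Union>(fst ` A)"
    using assms unfolding complex_atlas_def by simp
  then show ?thesis
    using that by force
qed

lemma stein_manifold_complex_atlas: "stein_manifold A \<Longrightarrow> complex_atlas A"
  by (simp add: stein_manifold_def)

lemma hol_fun_chartD:
  assumes "hol_fun A f" "(U, \<phi>) \<in> A"
  shows "hol_Cn_scalar (\<phi> ` U) (f \<circ> inv_into U \<phi>)"
  using assms unfolding hol_fun_def by fast

lemma complete_hol_flowD:
  assumes "complete_hol_flow A \<Phi>"
  shows "\<Phi> 0 = id" "\<Phi> (s + t) = \<Phi> s \<circ> \<Phi> t" "continuous_on UNIV (\<lambda>(t, x). \<Phi> t x)"
  using assms unfolding complete_hol_flow_def by blast+

lemma complete_hol_flow_chartD:
  assumes "complete_hol_flow A \<Phi>" "(U, \<phi>) \<in> A"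
  shows "hol_CxCn {(t, z). z \<in> \<phi> ` U \<and> \<Phi> t (inv_into U \<phi> z) \<in> U}
                  (\<lambda>(t, z). \<phi> (\<Phi> t (inv_into U \<phi> z)))"
  using assms unfolding complete_hol_flow_def by fast

lemma hol_fun_isCont:
  assumes "complex_atlas A" "hol_fun A f"
  shows "isCont f x"
proof -
  obtain U \<phi> where U: "(U, \<phi>) \<in> A" "x \<in> U"
    using complex_atlas_chart_at[OF assms(1)] .
  note chart = complex_atlas_chartD[OF assms(1) U(1)]
  have "continuous_on (\<phi> ` U) (f \<circ> inv_into U \<phi>)"
    using hol_fun_chartD[OF assms(2) U(1)] unfolding hol_Cn_scalar_def
    by (meson continuous_at_imp_continuous_on has_derivative_continuous)
  then have "continuous_on U (\<lambda>y. (f \<circ> inv_into U \<phi>) (\<phi> y))"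
    using chart(4) by (rule continuous_on_compose2) blast
  then have "continuous_on U f"
    by (rule continuous_on_eq) (simp add: chart(3))
  then show ?thesis
    using chart(1) U(2) continuous_on_eq_continuous_at by blast
qed

lemma continuous_on_flow_time:
  assumes "continuous_on UNIV (\<lambda>(t, x). \<Phi> t x)"
  shows "continuous_on UNIV (\<lambda>t. \<Phi> t x)"
  using continuous_on_compose[OF continuous_on_Pair[OF continuous_on_id continuous_on_const]
      continuous_on_subset[OF assms]]
  by (simp add: o_def)

lemma continuous_on_flow_map:
  assumes "continuous_on UNIV (\<lambda>(t, x). \<Phi> t x)"
  shows "continuous_on UNIV (\<Phi> t)"
  using continuous_on_compose[OF continuous_on_Pair[OF continuous_on_const continuous_on_id]
      continuous_on_subset[OF assms]]
  by (simp add: o_def)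

lemma flow_of_nat_mult:
  fixes \<Phi> :: "'b::semiring_1 \<Rightarrow> 'a \<Rightarrow> 'a"
  assumes "\<Phi> 0 = id" "\<And>s t. \<Phi> (s + t) = \<Phi> s \<circ> \<Phi> t"
  shows "\<Phi> (of_nat j * s) = \<Phi> s ^^ j"
proof (induction j)
  case 0
  show ?case using assms(1) by simp
next
  case (Suc j)
  have "\<Phi> (of_nat (Suc j) * s) = \<Phi> s \<circ> \<Phi> (of_nat j * s)"
    using assms(2)[of s "of_nat j * s"] by (simp add: distrib_right)
  with Suc show ?case by simp
qed

section \<open>Holomorphic functions along orbits\<close>

lemma linear_commuting_with_i_eq_mult:
  fixes M :: "complex \<Rightarrow> complex"
  assumes "linear M" "\<And>h. M (\<i> * h) = \<i> * M h"
  shows "M = (*) (M 1)"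
proof
  fix h
  have h: "h = Re h *\<^sub>R 1 + Im h *\<^sub>R \<i>"
    by (simp add: complex_eq_iff)
  have "M h = Re h *\<^sub>R M 1 + Im h *\<^sub>R M \<i>"
    by (subst h) (simp add: linear_add[OF assms(1)] linear_scale[OF assms(1)])
  also have "M \<i> = \<i> * M 1"
    using assms(2)[of 1] by simp
  finally show "M h = M 1 * h"
    by (subst (2) h) (simp add: scaleR_conv_of_real algebra_simps)
qed

lemma flow_chart_curve_has_derivative:
  assumes "complex_atlas A" "complete_hol_flow A \<Phi>" "(U, \<phi>) \<in> A" "p \<in> U"
  obtains L where "((\<lambda>h. \<phi> (\<Phi> h p)) has_derivative L) (at 0)" "\<And>h. L (\<i> * h) = \<i> *s L h"
proof -
  have p: "inv_into U \<phi> (\<phi> p) = p"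
    using complex_atlas_chartD(3)[OF assms(1,3)] assms(4) by simp
  have "(0, \<phi> p) \<in> {(t, z). z \<in> \<phi> ` U \<and> \<Phi> t (inv_into U \<phi> z) \<in> U}"
    using p assms(4) complete_hol_flowD(1)[OF assms(2)] by simp
  with complete_hol_flow_chartD[OF assms(2,3)]
  have "\<exists>L. ((\<lambda>(t, z). \<phi> (\<Phi> t (inv_into U \<phi> z))) has_derivative L) (at (0, \<phi> p)) \<and>
          (\<forall>t v. L (\<i> * t, \<i> *s v) = \<i> *s L (t, v))"
    unfolding hol_CxCn_def by (elim conjE) (erule bspec)
  then obtain L where L: "((\<lambda>(t, z). \<phi> (\<Phi> t (inv_into U \<phi> z))) has_derivative L) (at (0, \<phi> p))"
      "\<forall>t v. L (\<i> * t, \<i> *s v) = \<i> *s L (t, v)"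
    by blast
  have "((\<lambda>h. (h, \<phi> p)) has_derivative (\<lambda>h. (h, 0))) (at 0)"
    by (auto intro!: derivative_eq_intros)
  from has_derivative_compose[OF this L(1)]
  have "((\<lambda>h. \<phi> (\<Phi> h p)) has_derivative (\<lambda>h. L (h, 0))) (at 0)"
    by (simp add: p)
  moreover have "L (\<i> * h, 0) = \<i> *s L (h, 0)" for h
    using L(2)[rule_format, of h 0] by simp
  ultimately show ?thesis
    using that by blast
qed

lemma hol_fun_along_flow_field_differentiable:
  assumes "complex_atlas A" "complete_hol_flow A \<Phi>" "hol_fun A f"
  shows "(\<lambda>h. f (\<Phi> h p)) field_differentiable (at 0)"
proof -
  obtain U \<phi> where U: "(U, \<phi>) \<in> A" "p \<in> U"
    using complex_atlas_chart_at[OF assms(1)] .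
  note chart = complex_atlas_chartD[OF assms(1) U(1)]
  note flow = complete_hol_flowD[OF assms(2)]
  obtain L where L: "((\<lambda>h. \<phi> (\<Phi> h p)) has_derivative L) (at 0)" "\<And>h. L (\<i> * h) = \<i> *s L h"
    using flow_chart_curve_has_derivative[OF assms(1,2) U] by blast
  obtain Lg where Lg: "((f \<circ> inv_into U \<phi>) has_derivative Lg) (at (\<phi> p))" "\<And>v. Lg (\<i> *s v) = \<i> * Lg v"
    using hol_fun_chartD[OF assms(3) U(1)] U(2) unfolding hol_Cn_scalar_def by blast
  from Lg(1) have "((f \<circ> inv_into U \<phi>) has_derivative Lg) (at (\<phi> (\<Phi> 0 p)))"
    by (simp only: flow(1) id_apply)
  from has_derivative_compose[OF L(1) this]
  have "((\<lambda>h. (f \<circ> inv_into U \<phi>) (\<phi> (\<Phi> h p))) has_derivative (\<lambda>h. Lg (L h))) (at 0)" .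
  moreover have "open ((\<lambda>h. \<Phi> h p) -` U)"
    using open_vimage[OF chart(1) continuous_on_flow_time[OF flow(3)]] .
  moreover have "0 \<in> (\<lambda>h. \<Phi> h p) -` U"
    using U(2) flow(1) by simp
  moreover have "(f \<circ> inv_into U \<phi>) (\<phi> (\<Phi> h p)) = f (\<Phi> h p)" if "h \<in> (\<lambda>h. \<Phi> h p) -` U" for h
    using that chart(3) by simp
  ultimately have D: "((\<lambda>h. f (\<Phi> h p)) has_derivative (\<lambda>h. Lg (L h))) (at 0)"
    by (rule has_derivative_transform_within_open)
  have "linear (\<lambda>h. Lg (L h))"
    using D by (rule has_derivative_linear)
  then have "(\<lambda>h. Lg (L h)) = (*) (Lg (L 1))"
    by (rule linear_commuting_with_i_eq_mult) (simp add: L(2) Lg(2))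
  with D show ?thesis
    unfolding field_differentiable_def has_field_derivative_def by metis
qed

lemma hol_fun_along_flow_holomorphic:
  assumes "complex_atlas A" "complete_hol_flow A \<Phi>" "hol_fun A f"
  shows "(\<lambda>w. f (\<Phi> w y)) holomorphic_on UNIV"
proof -
  have "(\<lambda>w. f (\<Phi> w y)) field_differentiable (at w0)" for w0
  proof -
    have "(\<lambda>w. w - w0) field_differentiable (at w0)"
      by (intro field_differentiable_diff field_differentiable_ident field_differentiable_const)
    moreover have "(\<lambda>h. f (\<Phi> h (\<Phi> w0 y))) field_differentiable (at (w0 - w0))"
      using hol_fun_along_flow_field_differentiable[OF assms] by simp
    ultimately have "((\<lambda>h. f (\<Phi> h (\<Phi> w0 y))) \<circ> (\<lambda>w. w - w0)) field_differentiable (at w0)"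
      by (rule field_differentiable_compose)
    moreover have "\<Phi> (w - w0) (\<Phi> w0 y) = \<Phi> w y" for w
      using complete_hol_flowD(2)[OF assms(2), of "w - w0" w0] by simp
    ultimately show ?thesis
      by (simp add: o_def)
  qed
  then show ?thesis
    by (simp add: holomorphic_on_def field_differentiable_at_within)
qed

section \<open>Orbits trapped in a compact set\<close>

lemma stein_flow_orbit_in_compact_imp_fixed:
  assumes "stein_manifold A" "complete_hol_flow A \<Phi>" "compact K" "\<And>w. \<Phi> w y \<in> K"
  shows "\<Phi> w y = y"
proof (rule ccontr)
  assume "\<Phi> w y \<noteq> y"
  with assms(1) obtain f where f: "hol_fun A f" "f (\<Phi> w y) \<noteq> f y"
    unfolding stein_manifold_def by blast
  note atlas = stein_manifold_complex_atlas[OF assms(1)]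
  have "compact (f ` K)"
    using assms(3) hol_fun_isCont[OF atlas f(1)]
    by (intro compact_continuous_image continuous_at_imp_continuous_on) auto
  then have "bounded (range (\<lambda>u. f (\<Phi> u y)))"
    using assms(4) by (auto intro: bounded_subset compact_imp_bounded)
  then have "(\<lambda>u. f (\<Phi> u y)) constant_on UNIV"
    using Liouville_theorem[OF hol_fun_along_flow_holomorphic[OF atlas assms(2) f(1)]] by blast
  then have "f (\<Phi> w y) = f (\<Phi> 0 y)"
    unfolding constant_on_def by (metis UNIV_I)
  with f(2) show False
    using complete_hol_flowD(1)[OF assms(2)] by simp
qed

lemma flow_without_zeros_moves:
  assumes "complex_atlas A" "flow_without_zeros A \<Phi>"
  shows "\<exists>w. \<Phi> w y \<noteq> y"
proof (rule ccontr)
  assume "\<nexists>w. \<Phi> w y \<noteq> y"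
  then have "((\<lambda>t. \<phi> (\<Phi> t y)) has_derivative (\<lambda>_. 0)) (at 0)" for \<phi> :: "'a \<Rightarrow> complex^'n"
    by simp
  moreover obtain U \<phi> where "(U, \<phi>) \<in> A" "y \<in> U"
    using complex_atlas_chart_at[OF assms(1)] .
  ultimately show False
    using assms(2) unfolding flow_without_zeros_def by blast
qed

lemma flow_accumulation_point_orbit_in_compact:
  fixes \<Phi> :: "'b::real_normed_field \<Rightarrow> 'a::{first_countable_topology,t2_space} \<Rightarrow> 'a"
  assumes flow: "\<Phi> 0 = id" "\<And>s t. \<Phi> (s + t) = \<Phi> s \<circ> \<Phi> t" "\<And>w. continuous_on UNIV (\<Phi> w)"
    and T: "open T" "t \<in> T" and K: "compact K"
    and trapped: "\<And>s j. s \<in> T \<Longrightarrow> (\<Phi> s ^^ j) x \<in> K"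
  obtains y where "\<And>w. \<Phi> w y \<in> K"
proof -
  define a where "a k = (\<Phi> t ^^ k) x" for k
  obtain y r where y: "strict_mono r" "(a \<circ> r) \<longlonglongrightarrow> y"
    using compact_imp_seq_compact[OF K] trapped[OF T(2)] unfolding a_def
    by (metis seq_compactE)
  have "\<Phi> w y \<in> K" for w
  proof -
    have "(\<lambda>k. t + w * inverse (of_nat k)) \<longlonglongrightarrow> t"
      using tendsto_add[OF tendsto_const tendsto_mult[OF tendsto_const lim_inverse_n]] by simp
    then have "\<forall>\<^sub>F k in sequentially. t + w * inverse (of_nat k) \<in> T"
      using T by (rule topological_tendstoD)
    then have "\<forall>\<^sub>F k in sequentially. \<Phi> w (a k) \<in> K"
      using eventually_gt_at_top[of 0]
    proof eventually_elim
      case (elim k)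
      have "\<Phi> w (a k) = (\<Phi> w \<circ> \<Phi> (of_nat k * t)) x"
        by (simp add: a_def flow_of_nat_mult[of \<Phi>, OF flow(1,2)])
      also have "\<dots> = \<Phi> (w + of_nat k * t) x"
        by (simp only: flow(2))
      also have "w + of_nat k * t = of_nat k * (t + w * inverse (of_nat k))"
        using elim(2) by (simp add: field_simps)
      finally show ?case
        using trapped[OF elim(1)] by (simp add: flow_of_nat_mult[of \<Phi>, OF flow(1,2)])
    qed
    then have "\<forall>\<^sub>F k in sequentially. \<Phi> w ((a \<circ> r) k) \<in> K"
      using eventually_compose_filterlim filterlim_subseq[OF y(1)] by (fastforce simp: o_def)
    moreover have "(\<lambda>k. \<Phi> w ((a \<circ> r) k)) \<longlonglongrightarrow> \<Phi> w y"
      using flow(3)[of w] continuous_on_eq_continuous_at isCont_tendsto_compose[OF _ y(2)]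
      by blast
    ultimately show ?thesis
      by (rule Lim_in_closed_set[OF compact_imp_closed[OF K] _ sequentially_bot])
  qed
  then show ?thesis
    using that by blast
qed

lemma flow_iterates_escape_compact:
  assumes "stein_manifold A" "complete_hol_flow A \<Phi>" "flow_without_zeros A \<Phi>"
    and "open T" "T \<noteq> {}" "compact K"
  shows "\<exists>s\<in>T. \<exists>j. (\<Phi> s ^^ j) x \<notin> K"
proof (rule ccontr)
  assume trapped: "\<not> ?thesis"
  note flow = complete_hol_flowD[OF assms(2)]
  have "continuous_on UNIV (\<Phi> w)" for w
    using continuous_on_flow_map[OF flow(3)] .
  moreover obtain t where "t \<in> T"
    using assms(5) by blast
  ultimately obtain y where y: "\<And>w. \<Phi> w y \<in> K"
    using flow_accumulation_point_orbit_in_compact[of \<Phi>, OF flow(1,2) _ assms(4) _ assms(6)] trapped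
    by blast
  have "\<Phi> w y = y" for w
    using stein_flow_orbit_in_compact_imp_fixed[OF assms(1,2,6) y] .
  with flow_without_zeros_moves[OF stein_manifold_complex_atlas[OF assms(1)] assms(3)]
  show False
    by blast
qed

lemma flow_maps_compact_into_open_eventually:
  fixes \<Phi> :: "'b::topological_space \<Rightarrow> 'a::topological_space \<Rightarrow> 'a"
  assumes "continuous_on UNIV (\<lambda>(t, x). \<Phi> t x)" "compact K" "open U" "\<Phi> t ` K \<subseteq> U"
  shows "\<forall>\<^sub>F s in nhds t. \<Phi> s ` K \<subseteq> U"
proof -
  have "open ((\<lambda>(s, x). \<Phi> s x) -` U)"
    using open_vimage[OF assms(3,1)] .
  moreover have "{t} \<times> K \<subseteq> (\<lambda>(s, x). \<Phi> s x) -` U"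
    using assms(4) by auto
  ultimately have "\<exists>X. t \<in> X \<and> open X \<and> X \<times> K \<subseteq> (\<lambda>(s, x). \<Phi> s x) -` U"
    by (rule Elementary_Topology.tube_lemma[OF assms(2)])
  then obtain X where X: "t \<in> X" "open X" "X \<times> K \<subseteq> (\<lambda>(s, x). \<Phi> s x) -` U"
    by blast
  from X(3) have "\<forall>s\<in>X. \<Phi> s ` K \<subseteq> U"
    by auto
  with X(1,2) show ?thesis
    unfolding eventually_nhds by blast
qed

lemma co_basic_nhd_flow_eventually:
  fixes \<Phi> :: "'b::topological_space \<Rightarrow> 'a::topological_space \<Rightarrow> 'a"
  assumes "continuous_on UNIV (\<lambda>(t, x). \<Phi> t x)" "co_basic_nhd (range \<Phi>) (\<Phi> t) W"
  shows "\<forall>\<^sub>F s in nhds t. \<Phi> s \<in> W"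
proof -
  obtain P where P: "finite P" "\<forall>(K, U)\<in>P. compact K \<and> open U \<and> \<Phi> t ` K \<subseteq> U"
    and W: "W = {g \<in> range \<Phi>. \<forall>(K, U)\<in>P. g ` K \<subseteq> U}"
    using assms(2) unfolding co_basic_nhd_def by blast
  have "\<forall>p\<in>P. \<forall>\<^sub>F s in nhds t. \<Phi> s ` fst p \<subseteq> snd p"
    using P(2) flow_maps_compact_into_open_eventually[OF assms(1)] by auto
  then have "\<forall>\<^sub>F s in nhds t. \<forall>p\<in>P. \<Phi> s ` fst p \<subseteq> snd p"
    by (rule eventually_ball_finite[OF P(1)])
  then show ?thesis
    by (rule eventually_mono) (fastforce simp: W)
qed

lemma flow_not_robustly_non_expelling:
  assumes "stein_manifold A" "complete_hol_flow A \<Phi>" "flow_without_zeros A \<Phi>"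
  shows "\<not> robustly_non_expelling (range \<Phi>) (\<Phi> t)"
proof
  assume "robustly_non_expelling (range \<Phi>) (\<Phi> t)"
  then obtain W V K where W: "co_basic_nhd (range \<Phi>) (\<Phi> t) W" and "V \<noteq> {}" "compact K"
    and trapped: "\<forall>g\<in>W. \<forall>j::nat. (g ^^ j) ` V \<subseteq> K"
    unfolding robustly_non_expelling_def by blast
  obtain x where "x \<in> V"
    using \<open>V \<noteq> {}\<close> by blast
  obtain T where "open T" "t \<in> T" "\<forall>s\<in>T. \<Phi> s \<in> W"
    using co_basic_nhd_flow_eventually[OF complete_hol_flowD(3)[OF assms(2)] W]
    unfolding eventually_nhds by blast
  with trapped \<open>x \<in> V\<close> flow_iterates_escape_compact[OF assms \<open>open T\<close> _ \<open>compact K\<close>]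
  show False by blast
qed

section \<open>Expelling flow maps are generic\<close>

lemma complex_atlas_locally_compact:
  fixes A :: "('a::topological_space set \<times> ('a \<Rightarrow> complex^'n)) set" and x :: 'a
  assumes "complex_atlas A"
  obtains V C where "open V" "x \<in> V" "compact C" "V \<subseteq> C"
proof -
  obtain U \<phi> where U: "(U, \<phi>) \<in> A" "x \<in> U"
    using complex_atlas_chart_at[OF assms] .
  note chart = complex_atlas_chartD[OF assms U(1)]
  have "\<phi> x \<in> \<phi> ` U"
    using U(2) by simp
  with chart(2) obtain e where e: "e > 0" "cball (\<phi> x) e \<subseteq> \<phi> ` U"
    unfolding open_contains_cball by blast
  define V where "V = \<phi> -` ball (\<phi> x) e \<inter> U"
  have "open V"
    using continuous_on_open_vimage[OF chart(1)] chart(4) open_ball unfolding V_def by blast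
  moreover have "x \<in> V"
    using U(2) e(1) by (simp add: V_def)
  moreover have "compact (inv_into U \<phi> ` cball (\<phi> x) e)"
    using continuous_on_subset[OF chart(5) e(2)] by (rule compact_continuous_image) simp
  moreover have "V \<subseteq> inv_into U \<phi> ` cball (\<phi> x) e"
  proof
    fix y assume "y \<in> V"
    then have "y \<in> U" "\<phi> y \<in> cball (\<phi> x) e"
      by (auto simp: V_def)
    then show "y \<in> inv_into U \<phi> ` cball (\<phi> x) e"
      by (intro image_eqI[where x = "\<phi> y"]) (simp_all add: chart(3))
  qed
  ultimately show ?thesis
    by (rule that)
qed

lemma countable_cofinal_compacts:
  assumes "\<And>x::'a::{second_countable_topology,t2_space}. \<exists>V C. open V \<and> x \<in> V \<and> compact C \<and> V \<subseteq> C"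
  obtains \<K> :: "'a::{second_countable_topology,t2_space} set set"
  where "countable \<K>" "\<And>K. K \<in> \<K> \<Longrightarrow> compact K" "\<And>C. compact C \<Longrightarrow> \<exists>K\<in>\<K>. C \<subseteq> K"
proof -
  obtain B :: "'a set set" where B: "countable B" "topological_basis B"
    using ex_countable_basis by blast
  define B' where "B' = {b \<in> B. compact (closure b)}"
  have B'_cover: "\<exists>b\<in>B'. x \<in> b" for x
  proof -
    obtain V C where VC: "open V" "x \<in> V" "compact C" "V \<subseteq> C"
      using assms[of x] by blast
    obtain b where b: "b \<in> B" "x \<in> b" "b \<subseteq> V"
      by (rule topological_basisE[OF B(2) VC(1,2)])
    have "closure b \<subseteq> C"
      using b(3) VC(4) compact_imp_closed[OF VC(3)] closure_minimal by blast
    then have "compact (closure b)"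
      using VC(3) by (metis closed_closure compact_Int_closed inf.absorb2)
    with b show ?thesis
      unfolding B'_def by blast
  qed
  define \<K> where "\<K> = (\<lambda>F. \<Union>(closure ` F)) ` {F. finite F \<and> F \<subseteq> B'}"
  have "countable \<K>"
    using countable_subset[of B' B] B(1) unfolding \<K>_def B'_def
    by (intro countable_image countable_Collect_finite_subset) auto
  moreover have "compact K" if "K \<in> \<K>" for K
    using that unfolding \<K>_def B'_def by auto
  moreover have "\<exists>K\<in>\<K>. C \<subseteq> K" if "compact C" for C
  proof -
    have "C \<subseteq> \<Union>B'"
      using B'_cover by blast
    moreover have "open b" if "b \<in> B'" for b
      using that B(2) topological_basis_open unfolding B'_def by blast
    ultimately obtain F where F: "F \<subseteq> B'" "finite F" "C \<subseteq> \<Union>F"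
      by (rule compactE[OF \<open>compact C\<close>])
    then have "\<Union>(closure ` F) \<in> \<K>"
      unfolding \<K>_def by blast
    moreover have "C \<subseteq> \<Union>(closure ` F)"
      using F(3) closure_subset by blast
    ultimately show ?thesis
      by blast
  qed
  ultimately show ?thesis
    by (rule that)
qed

lemma expellingI:
  assumes dense: "\<And>X. open X \<Longrightarrow> X \<noteq> {} \<Longrightarrow> \<exists>d\<in>D. d \<in> X"
    and cofinal: "\<And>C. compact C \<Longrightarrow> \<exists>K\<in>\<K>. C \<subseteq> K"
    and escape: "\<And>d K. d \<in> D \<Longrightarrow> K \<in> \<K> \<Longrightarrow> \<exists>j. (f ^^ j) d \<notin> K"
  shows "expelling f"
  unfolding expelling_def
proof (rule ccontr)
  let ?N = "{x. compact (closure (range (\<lambda>j::nat. (f ^^ j) x)))}"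
  assume "interior ?N \<noteq> {}"
  from dense[OF open_interior this] obtain d where d: "d \<in> D" "d \<in> interior ?N"
    by blast
  then have "compact (closure (range (\<lambda>j. (f ^^ j) d)))"
    using interior_subset by blast
  from cofinal[OF this] obtain K where K: "K \<in> \<K>" "closure (range (\<lambda>j. (f ^^ j) d)) \<subseteq> K"
    by blast
  have "(f ^^ j) d \<in> K" for j
    using K(2) closure_subset[of "range (\<lambda>j. (f ^^ j) d)"] by auto
  with escape[OF d(1) K(1)] show False
    by blast
qed

lemma closed_times_with_iterates_in:
  fixes \<Phi> :: "'b::real_normed_algebra_1 \<Rightarrow> 'a::topological_space \<Rightarrow> 'a"
  assumes "\<Phi> 0 = id" "\<And>s t. \<Phi> (s + t) = \<Phi> s \<circ> \<Phi> t"
    and "continuous_on UNIV (\<lambda>(t, x). \<Phi> t x)" "closed K"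
  shows "closed {t. \<forall>j. (\<Phi> t ^^ j) d \<in> K}"
proof -
  have "{t. \<forall>j. (\<Phi> t ^^ j) d \<in> K} = (\<Inter>j. (\<lambda>t. \<Phi> (of_nat j * t) d) -` K)"
    by (auto simp: flow_of_nat_mult[of \<Phi>, OF assms(1,2)])
  moreover have "continuous_on UNIV (\<lambda>t. \<Phi> (of_nat j * t) d)" for j
    by (rule continuous_on_compose2[OF continuous_on_flow_time[OF assms(3)]])
      (simp_all add: continuous_on_mult_left)
  ultimately show ?thesis
    using assms(4) by (auto intro!: closed_vimage)
qed

lemma dense_Gdelta_Compl_UN:
  fixes E :: "'i \<Rightarrow> 'b::{real_normed_vector,heine_borel} set"
  assumes "countable I" "\<And>i. i \<in> I \<Longrightarrow> closed (E i)" "\<And>i. i \<in> I \<Longrightarrow> interior (E i) = {}"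
  shows "dense_Gdelta (- (\<Union>i\<in>I. E i))"
proof (cases "I = {}")
  case True
  then show ?thesis
    unfolding dense_Gdelta_def by (auto intro!: exI[of _ "\<lambda>_. UNIV"])
next
  case False
  define U where "U k = - E (from_nat_into I k)" for k
  have range: "range (from_nat_into I) = I"
    using range_from_nat_into[OF False assms(1)] .
  have G: "- (\<Union>i\<in>I. E i) = (\<Inter>k. U k)"
    unfolding U_def by (subst range[symmetric]) auto
  have open_U: "open (U k)" for k
    using assms(2) from_nat_into[OF False] by (auto simp: U_def)
  have "UNIV \<subseteq> closure (\<Inter>(range U))"
  proof (rule Baire)
    fix T assume "T \<in> range U"
    then obtain k where "T = U k" by blast
    moreover have "closure (U k) = UNIV"
      using assms(3) from_nat_into[OF False] by (simp add: U_def closure_complement)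
    ultimately show "openin (top_of_set UNIV) T \<and> UNIV \<subseteq> closure T"
      using open_U by simp
  qed auto
  then show ?thesis
    unfolding dense_Gdelta_def G using open_U by blast
qed

lemma flow_expelling_dense_Gdelta:
  assumes "stein_manifold A" "complete_hol_flow A \<Phi>" "flow_without_zeros A \<Phi>"
  shows "\<exists>G::complex set. dense_Gdelta G \<and> (\<forall>t\<in>G. expelling (\<Phi> t))"
proof -
  note flow = complete_hol_flowD[OF assms(2)]
  obtain D :: "'a set" where D: "countable D" "\<And>X. open X \<Longrightarrow> X \<noteq> {} \<Longrightarrow> \<exists>d\<in>D. d \<in> X"
    using countable_dense_setE by blast
  obtain \<K> :: "'a set set" where \<K>: "countable \<K>" "\<And>K. K \<in> \<K> \<Longrightarrow> compact K"
    "\<And>C. compact C \<Longrightarrow> \<exists>K\<in>\<K>. C \<subseteq> K"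
    using countable_cofinal_compacts complex_atlas_locally_compact
      stein_manifold_complex_atlas[OF assms(1)] by metis
  define E where "E = (\<lambda>(d, K). {t. \<forall>j. (\<Phi> t ^^ j) d \<in> K})"
  have "dense_Gdelta (- (\<Union>i\<in>D \<times> \<K>. E i))"
  proof (rule dense_Gdelta_Compl_UN)
    show "countable (D \<times> \<K>)"
      using D(1) \<K>(1) by simp
    fix i assume "i \<in> D \<times> \<K>"
    then obtain d K where i: "i = (d, K)" "K \<in> \<K>" by blast
    show "closed (E i)"
      unfolding E_def i using closed_times_with_iterates_in[OF flow compact_imp_closed[OF \<K>(2)[OF i(2)]]]
      by simp
    show "interior (E i) = {}"
    proof (rule ccontr)
      assume "interior (E i) \<noteq> {}"
      from flow_iterates_escape_compact[OF assms open_interior this \<K>(2)[OF i(2)]]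
      show False
        using interior_subset by (fastforce simp: E_def i)
    qed
  qed
  moreover have "expelling (\<Phi> t)" if "t \<in> - (\<Union>i\<in>D \<times> \<K>. E i)" for t
    using that by (intro expellingI[OF D(2) \<K>(3)]) (auto simp: E_def)
  ultimately show ?thesis
    by blast
qed

theorem mainTheorem12:
  fixes A :: "('a::{t2_space,second_countable_topology} set \<times> ('a \<Rightarrow> complex^'n)) set"
    and \<Phi> :: "complex \<Rightarrow> 'a \<Rightarrow> 'a"
  assumes "stein_manifold A"
    and "complete_hol_flow A \<Phi>"
    and "flow_without_zeros A \<Phi>"
  shows "(\<forall>t. \<not> robustly_non_expelling (range \<Phi>) (\<Phi> t)) \<and>
         (\<exists>G::complex set. dense_Gdelta G \<and> (\<forall>t\<in>G. expelling (\<Phi> t)))"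
  using flow_not_robustly_non_expelling[OF assms] flow_expelling_dense_Gdelta[OF assms]
  by blast

end
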